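(* Let ${\bm G}$ be a random matrix in $\mathbb{R}^{m\times n}$ with $\mathbb{E}[{\bm G}]={\bm M}$ and $\mathbb{E}[\|{\bm G}-{\bm M}\|_F^\alpha]\le\sigma^\alpha$ for some $\alpha\in(1,2]$ and $\sigma>0$, and let $\tau>0$, $d=\min\{m,n\}$. Then $$\mathbb{E}\big[\|\mathcal{C}_\tau({\bm G})\|_F^2\big]\le 2\|{\bm M}\|_F^2+2^{4-\alpha}d^{1-\alpha/2}\tau^{2-\alpha}\sigma^\alpha.$$ (In the paper this is applied conditionally on ${\bm X}_k$ with ${\bm G}={\bm G}_k$ and ${\bm M}=\nabla f({\bm X}_k)$.)
   Context: $\|\cdot\|_F$ is the Frobenius norm. Spectral clipping: for ${\bm G}\in\mathbb{R}^{m\times n}$ with (thin) SVD ${\bm G}={\bm U}\,\mathrm{diag}(\sigma_1,\dots,\sigma_d){\bm V}^\top$, $d=\min\{m,n\}$, and threshold $\tau>0$, define $\mathcal{C}_\tau({\bm G}):={\bm U}\,\mathrm{diag}(\min\{\sigma_1,\tau\},\dots,\min\{\sigma_d,\tau\}){\bm V}^\top$. *)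

theory Defs
  imports "HOL-Probability.Probability"
begin

text \<open>Matrices in R^{m x n} are represented as elements of real^'n^'m
  (rows indexed by 'm, columns by 'n).\<close>

definition frob_norm :: "real^'n::finite^'m::finite \<Rightarrow> real" where
  "frob_norm A = sqrt (\<Sum>i\<in>UNIV. \<Sum>j\<in>UNIV. (A $ i $ j)^2)"

definition outer_prod :: "real^'m::finite \<Rightarrow> real^'n::finite \<Rightarrow> real^'n^'m" where
  "outer_prod u v = (\<chi> i j. u $ i * v $ j)"

definition min_dim :: "real^'n::finite^'m::finite \<Rightarrow> nat" where
  "min_dim (A :: real^'n^'m) = min CARD('m) CARD('n)"

text \<open>Thin SVD G = U diag(s_1..s_d) V^T written in outer-product form:
  u_1..u_d orthonormal in R^m (columns of U), v_1..v_d orthonormal in R^n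
  (columns of V), s_1 >= ... >= s_d >= 0, d = min(m,n).\<close>
definition is_thin_svd ::
  "real^'n::finite^'m::finite \<Rightarrow> (nat \<Rightarrow> real) \<Rightarrow> (nat \<Rightarrow> real^'m) \<Rightarrow> (nat \<Rightarrow> real^'n) \<Rightarrow> bool" where
  "is_thin_svd G s u v \<longleftrightarrow>
     (\<forall>k<min_dim G. 0 \<le> s k) \<and>
     (\<forall>k. Suc k < min_dim G \<longrightarrow> s (Suc k) \<le> s k) \<and>
     (\<forall>k<min_dim G. \<forall>l<min_dim G. u k \<bullet> u l = (if k = l then 1 else 0)) \<and>
     (\<forall>k<min_dim G. \<forall>l<min_dim G. v k \<bullet> v l = (if k = l then 1 else 0)) \<and>
     G = (\<Sum>k<min_dim G. s k *\<^sub>R outer_prod (u k) (v k))"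

definition spec_clip :: "real \<Rightarrow> real^'n::finite^'m::finite \<Rightarrow> real^'n^'m" where
  "spec_clip \<tau> G = (SOME C. \<exists>s u v. is_thin_svd G s u v \<and>
       C = (\<Sum>k<min_dim G. min (s k) \<tau> *\<^sub>R outer_prod (u k) (v k)))"

end

theory Submission
  imports Defs
begin

(* Pointwise, norm (C_tau G) <= norm G and (norm (C_tau G))^2 <= d tau^2. Combined with
   (norm G)^2 <= 2 (norm M)^2 + 2 (norm (G - M))^2 and min a b <= a^theta b^(1 - theta) for
   theta = alpha/2, this gives
     (norm (C_tau G))^2 <= 2 (norm M)^2 + 2^(alpha/2) d^(1 - alpha/2) tau^(2 - alpha) (norm (G - M))^alpha,
   and taking expectations yields the claim because 2^(alpha/2) <= 2^(4 - alpha).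
   Both pointwise bounds, and the measurability of the clipped matrix, come from identifying
   C_tau G with the metric projection of G onto the closed convex operator-norm ball of radius
   tau; in particular C_tau G does not depend on the SVD picked by SOME. SVDs exist by the
   variational argument: v_k maximises norm (G x) over unit vectors x orthogonal to v_0, ...,
   v_(k-1). *)

section \<open>Orthonormal families\<close>

definition orthonormal_upto :: "nat \<Rightarrow> (nat \<Rightarrow> 'a::real_inner) \<Rightarrow> bool" where
  "orthonormal_upto d w \<longleftrightarrow> (\<forall>k<d. \<forall>l<d. w k \<bullet> w l = (if k = l then 1 else 0))"

lemma orthonormal_upto_inner_sum:
  assumes "orthonormal_upto d w"
  shows "(\<Sum>k<d. a k *\<^sub>R w k) \<bullet> (\<Sum>k<d. b k *\<^sub>R w k) = (\<Sum>k<d. a k * b k)"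
proof -
  have "(\<Sum>k<d. a k *\<^sub>R w k) \<bullet> (\<Sum>k<d. b k *\<^sub>R w k) = (\<Sum>l<d. b l * (\<Sum>k<d. a k * (w k \<bullet> w l)))"
    unfolding inner_sum_left inner_sum_right inner_scaleR_left inner_scaleR_right by (simp add: mult_ac)
  also have "\<dots> = (\<Sum>l<d. b l * (\<Sum>k<d. if k = l then a l else 0))"
    using assms unfolding orthonormal_upto_def by (intro sum.cong refl arg_cong2[where f="(*)"]) auto
  also have "\<dots> = (\<Sum>k<d. a k * b k)" by (simp add: mult.commute)
  finally show ?thesis .
qed

lemma orthonormal_upto_norm_sum:
  assumes "orthonormal_upto d w"
  shows "(norm (\<Sum>k<d. a k *\<^sub>R w k))\<^sup>2 = (\<Sum>k<d. (a k)\<^sup>2)"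
  unfolding power2_norm_eq_inner orthonormal_upto_inner_sum[OF assms] by (simp add: power2_eq_square)

lemma orthonormal_upto_inner_sum_left:
  assumes "orthonormal_upto d w" "j < d"
  shows "(\<Sum>k<d. c k *\<^sub>R w k) \<bullet> w j = c j"
proof -
  have "(\<Sum>k<d. c k *\<^sub>R w k) \<bullet> w j = (\<Sum>k<d. if k = j then c j else 0)"
    unfolding inner_sum_left using assms unfolding orthonormal_upto_def by (intro sum.cong refl) auto
  then show ?thesis using assms(2) by simp
qed

lemma orthonormal_upto_bessel:
  assumes "orthonormal_upto d w"
  shows "(\<Sum>k<d. (x \<bullet> w k)\<^sup>2) \<le> (norm x)\<^sup>2"
proof -
  define y where "y = (\<Sum>k<d. (x \<bullet> w k) *\<^sub>R w k)"
  have "y \<bullet> y = (\<Sum>k<d. (x \<bullet> w k)\<^sup>2)" and "x \<bullet> y = (\<Sum>k<d. (x \<bullet> w k)\<^sup>2)"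
    unfolding y_def orthonormal_upto_inner_sum[OF assms]
    by (simp_all add: inner_sum_right power2_eq_square)
  moreover have "0 \<le> (x - y) \<bullet> (x - y)" by simp
  ultimately show ?thesis
    by (simp add: power2_norm_eq_inner inner_diff_left inner_diff_right inner_commute)
qed

lemma orthonormal_upto_inj_on:
  assumes "orthonormal_upto d w"
  shows "inj_on w {..<d}"
  using assms unfolding orthonormal_upto_def inj_on_def by (metis lessThan_iff zero_neq_one)

lemma orthonormal_upto_complete:
  fixes w :: "nat \<Rightarrow> 'a::euclidean_space"
  assumes "orthonormal_upto DIM('a) w" and "\<forall>k<DIM('a). y \<bullet> w k = 0"
  shows "y = 0"
proof (rule ccontr)
  assume "y \<noteq> 0"
  let ?E = "insert y (w ` {..<DIM('a)})"
  have "pairwise orthogonal ?E"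
    using assms unfolding pairwise_def orthogonal_def orthonormal_upto_def
    by (auto simp: inner_commute)
  moreover have "0 \<notin> ?E"
    using \<open>y \<noteq> 0\<close> assms(1) unfolding orthonormal_upto_def by force
  ultimately have "card ?E \<le> DIM('a)"
    using independent_bound pairwise_orthogonal_independent by blast
  moreover have "y \<notin> w ` {..<DIM('a)}"
    using assms unfolding orthonormal_upto_def by force
  ultimately show False
    using orthonormal_upto_inj_on[OF assms(1)] by (simp add: card_image)
qed

lemma exists_unit_orthogonal_upto:
  fixes w :: "nat \<Rightarrow> 'a::euclidean_space"
  assumes "d < DIM('a)"
  obtains x where "norm x = 1" "\<forall>k<d. x \<bullet> w k = 0"
proof -
  have "dim (w ` {..<d}) \<le> card (w ` {..<d})"
    by (rule dim_le_card) (auto intro: span_base)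
  also have "\<dots> \<le> d" using card_image_le[of "{..<d}" w] by simp
  finally have "dim (w ` {..<d}) < DIM('a)" using assms by simp
  then obtain x where x: "x \<noteq> 0" "\<And>y. y \<in> span (w ` {..<d}) \<Longrightarrow> orthogonal x y"
    using orthogonal_to_subspace_exists by blast
  have "norm (x /\<^sub>R norm x) = 1" and "\<forall>k<d. (x /\<^sub>R norm x) \<bullet> w k = 0"
    using x by (auto simp: orthogonal_def intro: span_base)
  then show ?thesis using that by blast
qed

lemma orthonormal_upto_Suc:
  assumes "orthonormal_upto k w" "norm x = 1" "\<forall>j<k. x \<bullet> w j = 0"
  shows "orthonormal_upto (Suc k) (w(k := x))"
proof -
  have "x \<bullet> x = 1" using assms(2) by (metis norm_eq_1)
  then show ?thesis
    using assms(1,3) unfolding orthonormal_upto_def by (auto simp: less_Suc_eq inner_commute)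
qed

section \<open>Existence of a thin SVD\<close>

lemma linear_le_quadratic_imp_zero:
  fixes a c :: real
  assumes "\<And>t. t * a \<le> t\<^sup>2 * c"
  shows "a = 0"
proof (rule ccontr)
  assume "a \<noteq> 0"
  define p where "p = \<bar>c\<bar> + 1"
  have "p > 0" unfolding p_def by simp
  have "a\<^sup>2 / p = (a / p) * a" by (simp add: power2_eq_square)
  also have "\<dots> \<le> (a / p)\<^sup>2 * c" by (rule assms)
  also have "\<dots> \<le> (a / p)\<^sup>2 * \<bar>c\<bar>" by (simp add: mult_left_mono)
  also have "\<dots> < (a / p)\<^sup>2 * p" using \<open>a \<noteq> 0\<close> \<open>p > 0\<close> unfolding p_def by simp
  also have "\<dots> = a\<^sup>2 / p" using \<open>p > 0\<close> by (simp add: power2_eq_square)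
  finally show False by simp
qed

lemma linear_attains_max_gain:
  fixes f :: "'a::euclidean_space \<Rightarrow> 'b::real_normed_vector"
  assumes "linear f" "subspace V" "V \<noteq> {0}"
  obtains x where "x \<in> V" "norm x = 1" "\<And>y. y \<in> V \<Longrightarrow> norm (f y) \<le> norm (f x) * norm y"
proof -
  let ?S = "sphere 0 1 \<inter> V"
  have "compact ?S"
    using closed_subspace[OF assms(2)] by (intro compact_Int_closed compact_sphere)
  moreover have "?S \<noteq> {}"
  proof -
    obtain y where "y \<in> V" "y \<noteq> 0" using assms(3) subspace_0[OF assms(2)] by blast
    then have "y /\<^sub>R norm y \<in> ?S" using assms(2) by (simp add: subspace_scale)
    then show ?thesis by blast
  qed
  moreover have "continuous_on ?S (\<lambda>x. norm (f x))"
    using assms(1) linear_conv_bounded_linear by (intro continuous_on_norm linear_continuous_on) blast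
  ultimately obtain x where x: "x \<in> ?S" and max: "\<And>y. y \<in> ?S \<Longrightarrow> norm (f y) \<le> norm (f x)"
    using continuous_attains_sup[of ?S "\<lambda>x. norm (f x)"] by blast
  have "norm (f y) \<le> norm (f x) * norm y" if "y \<in> V" for y
  proof (cases "y = 0")
    case True
    then show ?thesis using assms(1) by (simp add: linear_0)
  next
    case False
    then have "norm (f (y /\<^sub>R norm y)) \<le> norm (f x)"
      using that assms(2) by (intro max) (simp add: subspace_scale)
    moreover have "f (y /\<^sub>R norm y) = f y /\<^sub>R norm y" using assms(1) by (simp add: linear_scale)
    ultimately show ?thesis using False by (simp add: divide_simps mult.commute)
  qed
  with x that show ?thesis by auto
qed

text \<open>Perturbing a maximiser x in a direction y orthogonal to it changes the gain only to
  first order through f x \<bullet> f y; maximality forces this coefficient to vanish.\<close>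
lemma max_gain_image_orthogonal:
  fixes f :: "'a::real_inner \<Rightarrow> 'b::real_inner"
  assumes "linear f" "subspace V" "x \<in> V" "norm x = 1"
    and max: "\<And>y. y \<in> V \<Longrightarrow> norm (f y) \<le> norm (f x) * norm y"
    and "y \<in> V" "x \<bullet> y = 0"
  shows "f x \<bullet> f y = 0"
proof -
  have "t * (2 * (f x \<bullet> f y)) \<le> t\<^sup>2 * ((norm (f x))\<^sup>2 * (norm y)\<^sup>2 - (norm (f y))\<^sup>2)" for t
  proof -
    have "x + t *\<^sub>R y \<in> V" using assms by (simp add: subspace_add subspace_scale)
    then have "(norm (f (x + t *\<^sub>R y)))\<^sup>2 \<le> (norm (f x) * norm (x + t *\<^sub>R y))\<^sup>2"
      by (simp add: max power_mono)
    moreover have "(norm (x + t *\<^sub>R y))\<^sup>2 = 1 + t\<^sup>2 * (norm y)\<^sup>2"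
      using assms(4,7) unfolding power2_norm_eq_inner
      by (simp add: inner_add_left inner_add_right inner_commute power2_eq_square norm_eq_1[symmetric])
    moreover have "f (x + t *\<^sub>R y) = f x + t *\<^sub>R f y" using assms(1) by (simp add: linear_add linear_scale)
    then have "(norm (f (x + t *\<^sub>R y)))\<^sup>2
        = (norm (f x))\<^sup>2 + t * (2 * (f x \<bullet> f y)) + t\<^sup>2 * (norm (f y))\<^sup>2"
      unfolding power2_norm_eq_inner
      by (simp add: inner_add_left inner_add_right inner_commute power2_eq_square algebra_simps)
    ultimately show ?thesis by (simp add: power_mult_distrib algebra_simps)
  qed
  then show ?thesis using linear_le_quadratic_imp_zero by fastforce
qed

text \<open>The state after k steps of the variational construction: s i is the maximal gain of f
  on the orthogonal complement of v 0, ..., v (i - 1), attained at v i.\<close>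
definition partial_svd ::
  "('a::real_inner \<Rightarrow> 'b::real_inner) \<Rightarrow> nat \<Rightarrow> (nat \<Rightarrow> real) \<Rightarrow> (nat \<Rightarrow> 'b) \<Rightarrow> (nat \<Rightarrow> 'a) \<Rightarrow> bool"
  where
  "partial_svd f k s u v \<longleftrightarrow> orthonormal_upto k v \<and> orthonormal_upto k u \<and>
     (\<forall>i<k. 0 \<le> s i) \<and> (\<forall>i. Suc i < k \<longrightarrow> s (Suc i) \<le> s i) \<and> (\<forall>i<k. f (v i) = s i *\<^sub>R u i) \<and>
     (\<forall>i<k. \<forall>x. (\<forall>j<i. x \<bullet> v j = 0) \<longrightarrow> norm (f x) \<le> s i * norm x) \<and>
     (\<forall>i<k. \<forall>x. (\<forall>j\<le>i. x \<bullet> v j = 0) \<longrightarrow> u i \<bullet> f x = 0)"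

lemma partial_svd_extend:
  assumes svd: "partial_svd f k s u v"
    and vk: "norm vk = 1" "\<forall>j<k. vk \<bullet> v j = 0"
    and uk: "norm uk = 1" "\<forall>j<k. uk \<bullet> u j = 0"
    and fvk: "f vk = sk *\<^sub>R uk" and sk: "0 \<le> sk"
    and gain: "\<And>x. \<forall>j<k. x \<bullet> v j = 0 \<Longrightarrow> norm (f x) \<le> sk * norm x"
    and image: "\<And>x. \<forall>j<k. x \<bullet> v j = 0 \<Longrightarrow> x \<bullet> vk = 0 \<Longrightarrow> uk \<bullet> f x = 0"
  shows "partial_svd f (Suc k) (s(k := sk)) (u(k := uk)) (v(k := vk))"
  unfolding partial_svd_def
proof (intro conjI allI impI)
  note I = svd[unfolded partial_svd_def]
  show "orthonormal_upto (Suc k) (v(k := vk))" using orthonormal_upto_Suc I vk by blast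
  show "orthonormal_upto (Suc k) (u(k := uk))" using orthonormal_upto_Suc I uk by blast
  show "0 \<le> (s(k := sk)) i" if "i < Suc k" for i using that I sk by (auto simp: less_Suc_eq)
  show "(s(k := sk)) (Suc i) \<le> (s(k := sk)) i" if "Suc i < Suc k" for i
  proof (cases "Suc i = k")
    case True
    have "i < k" "\<forall>j<i. vk \<bullet> v j = 0" using True vk by auto
    then have "norm (f vk) \<le> s i * norm vk" using I by blast
    then show ?thesis using True vk uk fvk sk by simp
  qed (use that I in auto)
  show "f ((v(k := vk)) i) = (s(k := sk)) i *\<^sub>R (u(k := uk)) i" if "i < Suc k" for i
    using that I fvk by (auto simp: less_Suc_eq)
  show "norm (f x) \<le> (s(k := sk)) i * norm x"
    if "i < Suc k" "\<forall>j<i. x \<bullet> (v(k := vk)) j = 0" for i x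
    using that I gain by (auto simp: less_Suc_eq)
  show "(u(k := uk)) i \<bullet> f x = 0"
    if i: "i < Suc k" and x: "\<forall>j\<le>i. x \<bullet> (v(k := vk)) j = 0" for i x
  proof -
    have "x \<bullet> v j = 0" if "j \<le> i" "j < k" for j using x[rule_format, of j] that by simp
    then show ?thesis
      using i x I image by (cases "i = k") (auto simp: less_Suc_eq)
  qed
qed

lemma exists_left_singular_vector:
  fixes f :: "'a::real_inner \<Rightarrow> 'b::euclidean_space"
  assumes "linear f" "subspace V" "x \<in> V" "norm x = 1"
    and max: "\<And>y. y \<in> V \<Longrightarrow> norm (f y) \<le> norm (f x) * norm y"
    and "k < DIM('b)" "\<forall>j<k. u j \<bullet> f x = 0"
  obtains w where "norm w = 1" "\<forall>j<k. w \<bullet> u j = 0" "f x = norm (f x) *\<^sub>R w"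
    "\<And>y. y \<in> V \<Longrightarrow> x \<bullet> y = 0 \<Longrightarrow> w \<bullet> f y = 0"
proof (cases "f x = 0")
  case True
  obtain w where "norm w = 1" "\<forall>j<k. w \<bullet> u j = 0"
    using exists_unit_orthogonal_upto[OF assms(6)] by blast
  moreover have "f y = 0" if "y \<in> V" for y using max[OF that] True by simp
  ultimately show ?thesis using that True by simp
next
  case False
  let ?w = "f x /\<^sub>R norm (f x)"
  show ?thesis
  proof (rule that[of ?w])
    show "norm ?w = 1" and "f x = norm (f x) *\<^sub>R ?w" using False by simp_all
    show "\<forall>j<k. ?w \<bullet> u j = 0" using assms(7) by (simp add: inner_commute)
    show "?w \<bullet> f y = 0" if "y \<in> V" "x \<bullet> y = 0" for y
      using max_gain_image_orthogonal[OF assms(1-5) that] by simp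
  qed
qed

lemma exists_partial_svd:
  fixes f :: "'a::euclidean_space \<Rightarrow> 'b::euclidean_space"
  assumes "linear f" "k \<le> min DIM('a) DIM('b)"
  shows "\<exists>s u v. partial_svd f k s u v"
  using assms(2)
proof (induction k)
  case 0
  show ?case by (auto simp: partial_svd_def orthonormal_upto_def)
next
  case (Suc k)
  then obtain s u v where svd: "partial_svd f k s u v" by auto
  define V where "V = {x. \<forall>j<k. x \<bullet> v j = 0}"
  have V: "subspace V" unfolding V_def subspace_def by (auto simp: inner_add_left)
  moreover have "V \<noteq> {0}"
  proof -
    obtain x where "norm x = 1" "\<forall>j<k. x \<bullet> v j = 0"
      using exists_unit_orthogonal_upto[of k v] Suc.prems by auto
    then have "x \<in> V" "x \<noteq> 0" unfolding V_def by auto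
    then show ?thesis by blast
  qed
  ultimately obtain vk where vk: "vk \<in> V" "norm vk = 1"
    and gain: "\<And>y. y \<in> V \<Longrightarrow> norm (f y) \<le> norm (f vk) * norm y"
    using linear_attains_max_gain[OF assms(1)] by blast
  have "k < DIM('b)" using Suc.prems by simp
  moreover have "\<forall>j<k. u j \<bullet> f vk = 0"
    using svd vk(1) unfolding partial_svd_def V_def by auto
  ultimately obtain uk where "norm uk = 1" "\<forall>j<k. uk \<bullet> u j = 0" "f vk = norm (f vk) *\<^sub>R uk"
    "\<And>y. y \<in> V \<Longrightarrow> vk \<bullet> y = 0 \<Longrightarrow> uk \<bullet> f y = 0"
    using exists_left_singular_vector[OF assms(1) V vk gain] by blast
  then have "partial_svd f (Suc k) (s(k := norm (f vk))) (u(k := uk)) (v(k := vk))"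
    using vk gain by (intro partial_svd_extend[OF svd]) (auto simp: V_def inner_commute)
  then show ?case by blast
qed

lemma partial_svd_expansion:
  fixes f :: "'a::euclidean_space \<Rightarrow> 'b::euclidean_space"
  defines "d \<equiv> min DIM('a) DIM('b)"
  assumes "linear f" "partial_svd f d s u v"
  shows "f x = (\<Sum>i<d. (s i * (v i \<bullet> x)) *\<^sub>R u i)"
proof -
  note I = assms(3)[unfolded partial_svd_def]
  define y where "y = x - (\<Sum>i<d. (v i \<bullet> x) *\<^sub>R v i)"
  have y: "\<forall>j<d. y \<bullet> v j = 0"
  proof (intro allI impI)
    fix j assume "j < d"
    then have "(\<Sum>i<d. (v i \<bullet> x) *\<^sub>R v i) \<bullet> v j = v j \<bullet> x"
      using orthonormal_upto_inner_sum_left[of d v] I by simp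
    then show "y \<bullet> v j = 0" unfolding y_def by (simp only: inner_diff_left) (simp add: inner_commute)
  qed
  have "f x = f y + (\<Sum>i<d. (v i \<bullet> x) *\<^sub>R f (v i))"
    unfolding y_def using assms(2) by (simp add: linear_diff linear_sum linear_scale)
  also have "(\<Sum>i<d. (v i \<bullet> x) *\<^sub>R f (v i)) = (\<Sum>i<d. (s i * (v i \<bullet> x)) *\<^sub>R u i)"
    using I by (intro sum.cong refl) (simp add: mult.commute)
  also have "f y = 0"
  proof (cases "d = DIM('a)")
    case True
    then have "y = 0" using orthonormal_upto_complete[of v y] I y by simp
    then show ?thesis using assms(2) by (simp add: linear_0)
  next
    case False
    then have "d = DIM('b)" unfolding d_def by linarith
    moreover have "\<forall>k<d. f y \<bullet> u k = 0" using I y by (auto simp: inner_commute)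
    ultimately show ?thesis using orthonormal_upto_complete[of u "f y"] I by simp
  qed
  finally show ?thesis by simp
qed

lemma matrix_vector_mult_outer_prod_sum:
  "(\<Sum>k<d. c k *\<^sub>R outer_prod (u k) (v k)) *v x = (\<Sum>k<d. (c k * (v k \<bullet> x)) *\<^sub>R u k)"
proof -
  have "((\<Sum>k<d. c k *\<^sub>R outer_prod (u k) (v k)) *v x) $ i
      = (\<Sum>j\<in>UNIV. \<Sum>k<d. c k * u k $ i * (v k $ j * x $ j))" for i
    by (simp add: matrix_vector_mult_def outer_prod_def sum_component sum_distrib_left mult_ac)
  also have "(\<Sum>j\<in>UNIV. \<Sum>k<d. c k * u k $ i * (v k $ j * x $ j))
      = (\<Sum>k<d. (c k * (v k \<bullet> x)) *\<^sub>R u k) $ i" for i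
    by (subst sum.swap) (simp add: sum_component inner_vec_def sum_distrib_left mult_ac)
  finally show ?thesis by (simp add: vec_eq_iff)
qed

lemma thin_svd_exists:
  fixes G :: "real^'n::finite^'m::finite"
  shows "\<exists>s u v. is_thin_svd G s u v"
proof -
  have lin: "linear ((*v) G)"
    using matrix_vector_mul_bounded_linear linear_conv_bounded_linear by blast
  obtain s u v where svd: "partial_svd ((*v) G) (min_dim G) s u v"
    using exists_partial_svd[OF lin, of "min_dim G"] unfolding min_dim_def by auto
  have "G = (\<Sum>k<min_dim G. s k *\<^sub>R outer_prod (u k) (v k))"
    unfolding matrix_eq matrix_vector_mult_outer_prod_sum
    using partial_svd_expansion[OF lin] svd unfolding min_dim_def by (simp add: min.commute)
  then have "is_thin_svd G s u v"
    using svd unfolding is_thin_svd_def partial_svd_def orthonormal_upto_def by blast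
  then show ?thesis by blast
qed

section \<open>Spectral clipping as a metric projection\<close>

lemma frob_norm_eq_norm: "frob_norm A = norm A"
  unfolding frob_norm_def norm_eq_sqrt_inner inner_vec_def by (simp add: power2_eq_square)

lemma inner_outer_prod: "outer_prod a b \<bullet> outer_prod c e = (a \<bullet> c) * (b \<bullet> e)"
  unfolding outer_prod_def inner_vec_def by (simp add: sum_product mult_ac) (rule sum.swap)

lemma inner_outer_prod_right: "X \<bullet> outer_prod a b = a \<bullet> (X *v b)"
  unfolding outer_prod_def inner_vec_def matrix_vector_mult_def
  by (simp add: sum_distrib_left mult_ac)

lemma orthonormal_upto_outer_prod:
  assumes "orthonormal_upto d u" "orthonormal_upto d v"
  shows "orthonormal_upto d (\<lambda>k. outer_prod (u k) (v k))"
  using assms unfolding orthonormal_upto_def inner_outer_prod by auto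

lemma is_thin_svdD:
  assumes "is_thin_svd G s u v"
  shows "\<forall>k<min_dim G. 0 \<le> s k" "orthonormal_upto (min_dim G) u" "orthonormal_upto (min_dim G) v"
    "G = (\<Sum>k<min_dim G. s k *\<^sub>R outer_prod (u k) (v k))"
  using assms unfolding is_thin_svd_def orthonormal_upto_def by auto

definition op_norm_ball :: "real \<Rightarrow> (real^'n::finite^'m::finite) set" where
  "op_norm_ball \<tau> = {X. \<forall>x. norm (X *v x) \<le> \<tau> * norm x}"

lemma convex_op_norm_ball: "convex (op_norm_ball \<tau>)"
  unfolding convex_def op_norm_ball_def
proof (intro ballI allI impI, simp only: mem_Collect_eq, intro allI)
  fix X Y :: "real^'n^'m" and a b :: real and x
  assume X: "\<forall>x. norm (X *v x) \<le> \<tau> * norm x" and Y: "\<forall>x. norm (Y *v x) \<le> \<tau> * norm x"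
    and ab: "0 \<le> a" "0 \<le> b" "a + b = 1"
  have "norm ((a *\<^sub>R X + b *\<^sub>R Y) *v x) = norm (a *\<^sub>R (X *v x) + b *\<^sub>R (Y *v x))"
    by (simp add: matrix_vector_mult_add_rdistrib scaleR_matrix_vector_assoc)
  also have "\<dots> \<le> a * norm (X *v x) + b * norm (Y *v x)"
    using ab by (metis abs_of_nonneg norm_scaleR norm_triangle_ineq)
  also have "\<dots> \<le> a * (\<tau> * norm x) + b * (\<tau> * norm x)"
    using ab X Y by (intro add_mono mult_left_mono) auto
  also have "\<dots> = \<tau> * norm x" using ab by (metis distrib_right mult_1)
  finally show "norm ((a *\<^sub>R X + b *\<^sub>R Y) *v x) \<le> \<tau> * norm x" .
qed

lemma closed_op_norm_ball: "closed (op_norm_ball \<tau> :: (real^'n::finite^'m::finite) set)"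
proof -
  have "continuous_on UNIV (\<lambda>X::real^'n^'m. X *v x)" for x
    unfolding matrix_vector_mult_def by (intro continuous_intros)
  then have "closed {X::real^'n^'m. norm (X *v x) \<le> \<tau> * norm x}" for x
    by (intro closed_Collect_le continuous_on_norm continuous_on_const)
  moreover have "op_norm_ball \<tau> = (\<Inter>x. {X::real^'n^'m. norm (X *v x) \<le> \<tau> * norm x})"
    unfolding op_norm_ball_def by auto
  ultimately show ?thesis by (simp add: closed_INT)
qed

lemma inner_outer_prod_le_op_norm_ball:
  assumes "X \<in> op_norm_ball \<tau>" "norm a = 1" "norm b = 1"
  shows "outer_prod a b \<bullet> X \<le> \<tau>"
proof -
  have "outer_prod a b \<bullet> X = a \<bullet> (X *v b)" by (simp add: inner_commute inner_outer_prod_right)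
  also have "\<dots> \<le> norm a * norm (X *v b)" by (rule Cauchy_Schwarz_ineq2[THEN abs_le_D1])
  also have "norm (X *v b) \<le> \<tau> * norm b" using assms(1) unfolding op_norm_ball_def by blast
  finally show ?thesis using assms(2,3) by simp
qed

lemma closest_point_eqI:
  fixes a c :: "'a::euclidean_space"
  assumes "convex S" "closed S" "c \<in> S" "\<And>x. x \<in> S \<Longrightarrow> (a - c) \<bullet> (x - c) \<le> 0"
  shows "closest_point S a = c"
proof -
  have "dist a c \<le> dist a x" if "x \<in> S" for x
  proof -
    have "(dist a x)\<^sup>2 = (dist a c)\<^sup>2 - 2 * ((a - c) \<bullet> (x - c)) + (norm (x - c))\<^sup>2"
      unfolding dist_norm power2_norm_eq_inner
      by (simp add: inner_diff_left inner_diff_right inner_commute)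
    then have "(dist a c)\<^sup>2 \<le> (dist a x)\<^sup>2"
      using assms(4)[OF that] zero_le_power2[of "norm (x - c)"] by linarith
    then show ?thesis by (simp add: power2_le_iff_abs_le)
  qed
  then show ?thesis using closest_point_unique[OF assms(1-3)] by simp
qed

lemma clipped_svd_in_op_norm_ball:
  fixes G :: "real^'n::finite^'m::finite"
  assumes "is_thin_svd G s u v" "0 \<le> \<tau>"
  shows "(\<Sum>k<min_dim G. min (s k) \<tau> *\<^sub>R outer_prod (u k) (v k)) \<in> op_norm_ball \<tau>"
  unfolding op_norm_ball_def mem_Collect_eq
proof
  fix x :: "real^'n"
  note svd = is_thin_svdD[OF assms(1)]
  let ?d = "min_dim G"
  have "(norm ((\<Sum>k<?d. min (s k) \<tau> *\<^sub>R outer_prod (u k) (v k)) *v x))\<^sup>2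
      = (\<Sum>k<?d. (min (s k) \<tau> * (v k \<bullet> x))\<^sup>2)"
    unfolding matrix_vector_mult_outer_prod_sum orthonormal_upto_norm_sum[OF svd(2)] ..
  also have "\<dots> \<le> (\<Sum>k<?d. \<tau>\<^sup>2 * (x \<bullet> v k)\<^sup>2)"
  proof (rule sum_mono)
    fix k assume "k \<in> {..<?d}"
    then have "(min (s k) \<tau>)\<^sup>2 \<le> \<tau>\<^sup>2" using svd(1) assms(2) by (intro power_mono) auto
    then show "(min (s k) \<tau> * (v k \<bullet> x))\<^sup>2 \<le> \<tau>\<^sup>2 * (x \<bullet> v k)\<^sup>2"
      by (simp add: power_mult_distrib inner_commute mult_right_mono)
  qed
  also have "\<dots> = \<tau>\<^sup>2 * (\<Sum>k<?d. (x \<bullet> v k)\<^sup>2)" by (rule sum_distrib_left[symmetric])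
  also have "\<dots> \<le> \<tau>\<^sup>2 * (norm x)\<^sup>2"
    using orthonormal_upto_bessel[OF svd(3), of x] by (rule mult_left_mono) simp
  also have "\<dots> = (\<tau> * norm x)\<^sup>2" by (simp add: power_mult_distrib)
  finally show "norm ((\<Sum>k<?d. min (s k) \<tau> *\<^sub>R outer_prod (u k) (v k)) *v x) \<le> \<tau> * norm x"
    by (rule power2_le_imp_le) (simp add: assms(2))
qed

text \<open>The residual G - C has coefficients s k - min (s k) \<tau>, which vanish unless
  min (s k) \<tau> = \<tau>; hence its inner product with C is \<tau> times their sum, and this majorises
  its inner product with every matrix of operator norm at most \<tau>.\<close>
lemma clipped_svd_eq_closest_point:
  fixes G :: "real^'n::finite^'m::finite"
  assumes "is_thin_svd G s u v" "0 \<le> \<tau>"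
  shows "closest_point (op_norm_ball \<tau>) G = (\<Sum>k<min_dim G. min (s k) \<tau> *\<^sub>R outer_prod (u k) (v k))"
    (is "_ = ?C")
proof (rule closest_point_eqI[OF convex_op_norm_ball closed_op_norm_ball
      clipped_svd_in_op_norm_ball[OF assms]])
  note svd = is_thin_svdD[OF assms(1)]
  let ?d = "min_dim G" and ?O = "\<lambda>k. outer_prod (u k) (v k)"
  have R: "G - ?C = (\<Sum>k<?d. (s k - min (s k) \<tau>) *\<^sub>R ?O k)"
    by (subst svd(4)) (simp add: sum_subtractf scaleR_diff_left)
  fix X :: "real^'n^'m" assume X: "X \<in> op_norm_ball \<tau>"
  have "(G - ?C) \<bullet> X = (\<Sum>k<?d. (s k - min (s k) \<tau>) * (?O k \<bullet> X))"
    unfolding R inner_sum_left by simp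
  also have "\<dots> \<le> (\<Sum>k<?d. (s k - min (s k) \<tau>) * \<tau>)"
  proof (intro sum_mono mult_left_mono)
    fix k assume "k \<in> {..<?d}"
    then have "norm (u k) = 1" "norm (v k) = 1"
      using svd(2,3) unfolding orthonormal_upto_def by (auto simp: norm_eq_1)
    then show "?O k \<bullet> X \<le> \<tau>" using inner_outer_prod_le_op_norm_ball[OF X] by blast
  qed simp
  also have "\<dots> = (G - ?C) \<bullet> ?C"
    unfolding R orthonormal_upto_inner_sum[OF orthonormal_upto_outer_prod[OF svd(2,3)]]
    by (intro sum.cong refl) (auto simp: min_def)
  finally show "(G - ?C) \<bullet> (X - ?C) \<le> 0" by (simp add: inner_diff_right)
qed

lemma spec_clip_eq_closest_point:
  fixes G :: "real^'n::finite^'m::finite"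
  assumes "0 \<le> \<tau>"
  shows "spec_clip \<tau> G = closest_point (op_norm_ball \<tau>) G"
proof -
  have "\<exists>C. \<exists>s u v. is_thin_svd G s u v \<and>
      C = (\<Sum>k<min_dim G. min (s k) \<tau> *\<^sub>R outer_prod (u k) (v k))"
    using thin_svd_exists by blast
  from someI_ex[OF this] obtain s u v where svd: "is_thin_svd G s u v"
    and eq: "spec_clip \<tau> G = (\<Sum>k<min_dim G. min (s k) \<tau> *\<^sub>R outer_prod (u k) (v k))"
    unfolding spec_clip_def by blast
  show ?thesis unfolding eq clipped_svd_eq_closest_point[OF svd assms] ..
qed

lemma norm_spec_clip_le:
  fixes G :: "real^'n::finite^'m::finite"
  assumes "0 \<le> \<tau>"
  shows "norm (spec_clip \<tau> G) \<le> norm G"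
proof -
  have "0 \<in> (op_norm_ball \<tau> :: (real^'n^'m) set)" unfolding op_norm_ball_def using assms by simp
  then have "dist (closest_point (op_norm_ball \<tau>) 0) (closest_point (op_norm_ball \<tau>) G) \<le> dist 0 G"
    by (intro closest_point_lipschitz convex_op_norm_ball closed_op_norm_ball) blast
  moreover have "closest_point (op_norm_ball \<tau>) 0 = (0 :: real^'n^'m)"
    using \<open>0 \<in> op_norm_ball \<tau>\<close> by (simp add: closest_point_self)
  ultimately show ?thesis by (simp add: spec_clip_eq_closest_point[OF assms] dist_0_norm)
qed

lemma norm_spec_clip_sq_le:
  fixes G :: "real^'n::finite^'m::finite"
  assumes "0 \<le> \<tau>"
  shows "(norm (spec_clip \<tau> G))\<^sup>2 \<le> real (min_dim G) * \<tau>\<^sup>2"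
proof -
  obtain s u v where svd: "is_thin_svd G s u v" using thin_svd_exists by blast
  note svd' = is_thin_svdD[OF svd]
  have "(norm (spec_clip \<tau> G))\<^sup>2 = (\<Sum>k<min_dim G. (min (s k) \<tau>)\<^sup>2)"
    unfolding spec_clip_eq_closest_point[OF assms] clipped_svd_eq_closest_point[OF svd assms]
    by (rule orthonormal_upto_norm_sum[OF orthonormal_upto_outer_prod[OF svd'(2,3)]])
  also have "\<dots> \<le> (\<Sum>k<min_dim G. \<tau>\<^sup>2)" using svd'(1) assms by (intro sum_mono power_mono) auto
  finally show ?thesis by simp
qed

section \<open>The second moment of the clipped matrix\<close>

lemma min_le_powr_mult_powr:
  fixes a b \<theta> :: real
  assumes "0 \<le> a" "0 \<le> b" "0 < \<theta>" "\<theta> \<le> 1"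
  shows "min a b \<le> a powr \<theta> * b powr (1 - \<theta>)"
proof (cases "min a b = 0")
  case False
  let ?m = "min a b"
  have "?m = ?m powr \<theta> * ?m powr (1 - \<theta>)" using False assms by (simp add: powr_add[symmetric])
  also have "\<dots> \<le> a powr \<theta> * b powr (1 - \<theta>)" using assms by (intro mult_mono powr_mono2) auto
  finally show ?thesis .
qed simp

lemma le_interpolated_bound:
  fixes g m :: "'a::real_normed_vector"
  assumes "h \<le> (norm g)\<^sup>2" "h \<le> D * \<tau>\<^sup>2" "0 \<le> D" "0 < \<tau>" "0 < \<alpha>" "\<alpha> \<le> 2"
  shows "h \<le> 2 * (norm m)\<^sup>2
    + 2 powr (\<alpha> / 2) * D powr (1 - \<alpha> / 2) * \<tau> powr (2 - \<alpha>) * norm (g - m) powr \<alpha>"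
proof -
  define n where "n = norm (g - m)"
  have "(norm g)\<^sup>2 \<le> (norm m + n)\<^sup>2"
    unfolding n_def by (rule power_mono) (metis add.commute diff_add_cancel norm_triangle_ineq, simp)
  also have "\<dots> \<le> 2 * (norm m)\<^sup>2 + 2 * n\<^sup>2"
    by (smt (verit) sum_squares_bound power2_sum zero_le_power2 power2_diff)
  finally have "h \<le> 2 * (norm m)\<^sup>2 + min (2 * n\<^sup>2) (D * \<tau>\<^sup>2)"
    using assms(1,2) by (smt (verit) zero_le_power2 norm_ge_zero)
  also have "min (2 * n\<^sup>2) (D * \<tau>\<^sup>2) \<le> (2 * n\<^sup>2) powr (\<alpha> / 2) * (D * \<tau>\<^sup>2) powr (1 - \<alpha> / 2)"
    using assms(3-6) by (intro min_le_powr_mult_powr) auto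
  also have "(2 * n\<^sup>2) powr (\<alpha> / 2) = 2 powr (\<alpha> / 2) * n powr \<alpha>"
    by (simp add: n_def powr_mult powr_powr flip: powr_numeral)
  also have "(D * \<tau>\<^sup>2) powr (1 - \<alpha> / 2) = D powr (1 - \<alpha> / 2) * \<tau> powr (2 - \<alpha>)"
    using assms(3,4) by (simp add: powr_mult powr_powr algebra_simps flip: powr_numeral)
  finally show ?thesis unfolding n_def by (simp add: mult_ac)
qed

lemma integrable_spec_clip_sq:
  fixes G :: "'a \<Rightarrow> real^'n::finite^'m::finite"
  assumes "finite_measure P" "G \<in> borel_measurable P" "0 \<le> \<tau>"
  shows "integrable P (\<lambda>\<omega>. (norm (spec_clip \<tau> (G \<omega>)))\<^sup>2)"
proof -
  have "continuous_on UNIV (\<lambda>A::real^'n^'m. (norm (closest_point (op_norm_ball \<tau>) A))\<^sup>2)"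
    by (intro continuous_intros continuous_on_closest_point convex_op_norm_ball closed_op_norm_ball)
      (auto simp: op_norm_ball_def assms(3) intro!: exI[where x=0])
  then have "(\<lambda>\<omega>. (norm (spec_clip \<tau> (G \<omega>)))\<^sup>2) \<in> borel_measurable P"
    unfolding spec_clip_eq_closest_point[OF assms(3)]
    by (rule borel_measurable_continuous_on[OF _ assms(2)])
  then show ?thesis
    using norm_spec_clip_sq_le[OF assms(3)]
    by (intro finite_measure.integrable_const_bound[OF assms(1),
          where B = "real (min CARD('m) CARD('n)) * \<tau>\<^sup>2"]) (auto simp: min_dim_def)
qed

theorem mainTheorem4:
  fixes P :: "'a measure"
    and G :: "'a \<Rightarrow> real^'n::finite^'m::finite"
    and Mm :: "real^'n^'m"
    and \<alpha> \<sigma> \<tau> :: real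
  assumes "prob_space P"
    and "G \<in> borel_measurable P"
    and "integrable P G"
    and "integral\<^sup>L P G = Mm"
    and "1 < \<alpha>" and "\<alpha> \<le> 2" and "0 < \<sigma>" and "0 < \<tau>"
    and "integrable P (\<lambda>\<omega>. frob_norm (G \<omega> - Mm) powr \<alpha>)"
    and "integral\<^sup>L P (\<lambda>\<omega>. frob_norm (G \<omega> - Mm) powr \<alpha>) \<le> \<sigma> powr \<alpha>"
  shows "integrable P (\<lambda>\<omega>. (frob_norm (spec_clip \<tau> (G \<omega>)))\<^sup>2) \<and>
         integral\<^sup>L P (\<lambda>\<omega>. (frob_norm (spec_clip \<tau> (G \<omega>)))\<^sup>2)
           \<le> 2 * (frob_norm Mm)\<^sup>2
             + 2 powr (4 - \<alpha>) * real (min CARD('m) CARD('n)) powr (1 - \<alpha> / 2)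
               * \<tau> powr (2 - \<alpha>) * \<sigma> powr \<alpha>"
proof -
  interpret prob_space P by fact
  let ?D = "real (min CARD('m) CARD('n))"
  let ?c = "2 powr (\<alpha> / 2) * ?D powr (1 - \<alpha> / 2) * \<tau> powr (2 - \<alpha>)"
  define h where "h \<omega> = (norm (spec_clip \<tau> (G \<omega>)))\<^sup>2" for \<omega>
  define e where "e = (\<lambda>\<omega>. frob_norm (G \<omega> - Mm) powr \<alpha>)"
  have h_int: "integrable P h"
    unfolding h_def using integrable_spec_clip_sq[OF finite_measure_axioms assms(2)] assms(8) by simp
  have "h \<omega> \<le> 2 * (norm Mm)\<^sup>2 + ?c * e \<omega>" for \<omega>
    unfolding h_def e_def frob_norm_eq_norm
    using norm_spec_clip_le[of \<tau> "G \<omega>"] norm_spec_clip_sq_le[of \<tau> "G \<omega>"] assms(5,6,8)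
    by (intro le_interpolated_bound) (auto simp: min_dim_def power_mono)
  then have "integral\<^sup>L P h \<le> 2 * (norm Mm)\<^sup>2 + ?c * integral\<^sup>L P e"
    using integral_mono[OF h_int, of "\<lambda>\<omega>. 2 * (norm Mm)\<^sup>2 + ?c * e \<omega>"] assms(9)
    by (simp add: e_def prob_space)
  also have "?c * integral\<^sup>L P e \<le> 2 powr (4 - \<alpha>) * ?D powr (1 - \<alpha> / 2) * \<tau> powr (2 - \<alpha>) * \<sigma> powr \<alpha>"
    using assms(5,6,10) unfolding e_def
    by (intro mult_mono powr_mono mult_right_mono integral_nonneg) auto
  finally show ?thesis using h_int unfolding h_def frob_norm_eq_norm by simp
qed

end
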